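(* In the setting of the context, for all integers $m\ge1$ and $n\ge0$, $$\alpha(A_{n+m-1}A_{n+m-2}\cdots A_n)\ \ge\ \gamma(1-\gamma)^{m-1}\,\mathcal G_{[n,n+m)}.$$
   Context: Let $N\ge2$, $d\ge1$, $\mathcal N=\{1,\dots,N\}$, $\gamma\in(0,1)$. For each nonempty $S\subseteq\mathcal N$ and $j\in\mathcal N$ let $\omega_{S,j}:(\mathbb R^d)^N\to[0,\infty)$ satisfy $\sum_{j\in S}\omega_{S,j}(X)=1$ and $\omega_{S,j}(X)=0$ for $j\notin S$. For each time $r\ge0$ let $\{[i]_r:i\in\mathcal N\}$ be a partition of $\mathcal N$ ($[i]_r$ the block containing $i$) and $X_r\in(\mathbb R^d)^N$ a state. Let $W_r:=(\omega_{[i]_r,j}(X_r))_{i,j}$ and $A_r:=(1-\gamma)I_N+\gamma W_r$. For $n\ge0,m\ge1$ set $\mathcal T^{ij}_{[n,n+m)}:=\{r: n\le r<n+m,\ [i]_r=[j]_r\}$ and $\mathcal G_{[n,n+m)}:=\min_{i,j\in\mathcal N}|\mathcal T^{ij}_{[n,n+m)}|$. The ergodicity coefficient of $A=(a_{ij})$ is $\alpha(A):=\min_{i,j}\sum_{k}\min\{a_{ik},a_{jk}\}$. *)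

theory Defs
  imports "HOL-Analysis.Analysis"
begin

text \<open>N x N real matrices are represented as functions nat => nat => real, only the
entries with indices in {1..N} being relevant.\<close>

definition mat_mult :: "nat \<Rightarrow> (nat \<Rightarrow> nat \<Rightarrow> real) \<Rightarrow> (nat \<Rightarrow> nat \<Rightarrow> real) \<Rightarrow> (nat \<Rightarrow> nat \<Rightarrow> real)" where
  "mat_mult N A B = (\<lambda>i j. \<Sum>k\<in>{1..N}. A i k * B k j)"

definition id_mat :: "nat \<Rightarrow> nat \<Rightarrow> real" where
  "id_mat = (\<lambda>i j. if i = j then 1 else 0)"

definition ergodicity_coeff :: "nat \<Rightarrow> (nat \<Rightarrow> nat \<Rightarrow> real) \<Rightarrow> real" where
  "ergodicity_coeff N A =
     Min ((\<lambda>(i,j). \<Sum>k\<in>{1..N}. min (A i k) (A j k)) ` ({1..N} \<times> {1..N}))"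

text \<open>blk r i is the block [i]_r of the partition at time r; a partition of {1..N}.\<close>
definition is_partition_fun :: "nat \<Rightarrow> (nat \<Rightarrow> nat set) \<Rightarrow> bool" where
  "is_partition_fun N P \<longleftrightarrow>
     (\<forall>i\<in>{1..N}. i \<in> P i \<and> P i \<subseteq> {1..N} \<and> (\<forall>j\<in>P i. P j = P i))"

definition A_mat :: "nat \<Rightarrow> real \<Rightarrow> (nat set \<Rightarrow> nat \<Rightarrow> 'x \<Rightarrow> real)
     \<Rightarrow> (nat \<Rightarrow> nat \<Rightarrow> nat set) \<Rightarrow> (nat \<Rightarrow> 'x) \<Rightarrow> nat \<Rightarrow> (nat \<Rightarrow> nat \<Rightarrow> real)" where
  "A_mat N \<gamma> \<omega> blk X r = (\<lambda>i j. (1 - \<gamma>) * id_mat i j + \<gamma> * \<omega> (blk r i) j (X r))"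

fun prod_A :: "nat \<Rightarrow> real \<Rightarrow> (nat set \<Rightarrow> nat \<Rightarrow> 'x \<Rightarrow> real)
     \<Rightarrow> (nat \<Rightarrow> nat \<Rightarrow> nat set) \<Rightarrow> (nat \<Rightarrow> 'x) \<Rightarrow> nat \<Rightarrow> nat \<Rightarrow> (nat \<Rightarrow> nat \<Rightarrow> real)" where
  "prod_A N \<gamma> \<omega> blk X n 0 = id_mat"
| "prod_A N \<gamma> \<omega> blk X n (Suc k) =
     mat_mult N (A_mat N \<gamma> \<omega> blk X (n + k)) (prod_A N \<gamma> \<omega> blk X n k)"

definition T_set :: "(nat \<Rightarrow> nat \<Rightarrow> nat set) \<Rightarrow> nat \<Rightarrow> nat \<Rightarrow> nat \<Rightarrow> nat \<Rightarrow> nat set" where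
  "T_set blk i j n m = {r. n \<le> r \<and> r < n + m \<and> blk r i = blk r j}"

definition G_val :: "nat \<Rightarrow> (nat \<Rightarrow> nat \<Rightarrow> nat set) \<Rightarrow> nat \<Rightarrow> nat \<Rightarrow> nat" where
  "G_val N blk n m = Min ((\<lambda>(i,j). card (T_set blk i j n m)) ` ({1..N} \<times> {1..N}))"

end

theory Submission
  imports Defs
begin

text \<open>Expanding the product \<open>A\<^sub>n\<^sub>+\<^sub>m\<^sub>-\<^sub>1 \<cdots> A\<^sub>n\<close> and keeping only the terms that take the
  \<open>\<gamma> W\<^sub>r\<close> part at a single time \<open>r\<close> and the \<open>(1 - \<gamma>) I\<close> part at all other times gives
  \<open>P\<^sub>i\<^sub>k \<ge> \<gamma> (1 - \<gamma>)\<^sup>m\<^sup>-\<^sup>1 \<Sum>\<^sub>r W\<^sub>r(i,k)\<close>. At every time \<open>r\<close> with \<open>[i]\<^sub>r = [j]\<^sub>r\<close> the rows \<open>i\<close> and \<open>j\<close>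
  of \<open>W\<^sub>r\<close> coincide and sum to 1, so each such time contributes \<open>\<gamma> (1 - \<gamma>)\<^sup>m\<^sup>-\<^sup>1\<close> to
  \<open>\<Sum>\<^sub>k min(P\<^sub>i\<^sub>k, P\<^sub>j\<^sub>k)\<close>.\<close>

lemma mat_mult_id_left:
  assumes "i \<in> {1..N}"
  shows "mat_mult N id_mat A i k = A i k"
proof -
  have "mat_mult N id_mat A i k = (\<Sum>l\<in>{1..N}. if l = i then A l k else 0)"
    unfolding mat_mult_def by (intro sum.cong) (auto simp: id_mat_def)
  also have "\<dots> = A i k" using assms by (simp add: sum.delta')
  finally show ?thesis .
qed

lemma mat_mult_id_right:
  assumes "k \<in> {1..N}"
  shows "mat_mult N A id_mat i k = A i k"
  using assms by (simp add: mat_mult_def id_mat_def if_distrib cong: if_cong)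

lemma id_mat_nonneg: "id_mat i k \<ge> 0"
  by (simp add: id_mat_def)

lemma mat_mult_A_mat_entry_ge:
  assumes gam: "0 \<le> \<gamma>" "\<gamma> \<le> 1"
    and w_nonneg: "\<And>S j Y. \<omega> S j Y \<ge> 0"
    and ik: "i \<in> {1..N}" "k \<in> {1..N}"
    and P_nonneg: "\<And>l. l \<in> {1..N} \<Longrightarrow> P l k \<ge> 0"
  shows "mat_mult N (A_mat N \<gamma> \<omega> blk X r) P i k
           \<ge> (1 - \<gamma>) * P i k + \<gamma> * \<omega> (blk r i) k (X r) * P k k"
proof -
  let ?W = "\<lambda>l. \<omega> (blk r i) l (X r)"
  have split: "mat_mult N (A_mat N \<gamma> \<omega> blk X r) P i k
      = (1 - \<gamma>) * mat_mult N id_mat P i k + \<gamma> * (\<Sum>l\<in>{1..N}. ?W l * P l k)"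
  proof -
    have "mat_mult N (A_mat N \<gamma> \<omega> blk X r) P i k
        = (\<Sum>l\<in>{1..N}. (1 - \<gamma>) * (id_mat i l * P l k) + \<gamma> * (?W l * P l k))"
      unfolding mat_mult_def A_mat_def by (simp add: algebra_simps)
    then show ?thesis
      unfolding mat_mult_def by (simp add: sum.distrib sum_distrib_left)
  qed
  have "?W k * P k k \<le> (\<Sum>l\<in>{1..N}. ?W l * P l k)"
    using ik P_nonneg w_nonneg
    by (intro member_le_sum[where f = "\<lambda>l. ?W l * P l k"]) auto
  then have "\<gamma> * (?W k * P k k) \<le> \<gamma> * (\<Sum>l\<in>{1..N}. ?W l * P l k)"
    using gam by (intro mult_left_mono) auto
  then show ?thesis
    unfolding split mat_mult_id_left[OF ik(1)] by (simp add: mult.assoc)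
qed

lemma prod_A_entry_ge:
  assumes gam: "0 < \<gamma>" "\<gamma> < 1"
    and w_nonneg: "\<And>S j Y. \<omega> S j Y \<ge> 0"
    and ik: "i \<in> {1..N}" "k \<in> {1..N}"
  shows "prod_A N \<gamma> \<omega> blk X n (Suc m) i k
           \<ge> (1 - \<gamma>) ^ Suc m * id_mat i k
             + \<gamma> * (1 - \<gamma>) ^ m * (\<Sum>t<Suc m. \<omega> (blk (n + t) i) k (X (n + t)))"
  using ik
proof (induction m arbitrary: i k)
  case 0
  then show ?case
    by (simp add: mat_mult_id_right A_mat_def)
next
  case (Suc m)
  let ?P = "prod_A N \<gamma> \<omega> blk X n (Suc m)"
  let ?S = "\<lambda>i k. \<Sum>t<Suc m. \<omega> (blk (n + t) i) k (X (n + t))"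
  let ?w = "\<omega> (blk (n + Suc m) i) k (X (n + Suc m))"
  have S_nonneg: "?S i k \<ge> 0" for i k
    using w_nonneg by (intro sum_nonneg) auto
  have lower_nonneg: "(1 - \<gamma>) ^ Suc m * id_mat i k + \<gamma> * (1 - \<gamma>) ^ m * ?S i k \<ge> 0" for i k
    using gam S_nonneg[of i k] id_mat_nonneg[of i k] by simp
  have P_nonneg: "?P l k \<ge> 0" if "l \<in> {1..N}" for l
    using Suc.IH[OF that Suc.prems(2)] lower_nonneg[of l k] by linarith
  have "\<gamma> * (1 - \<gamma>) ^ m * ?S k k \<ge> 0"
    using gam S_nonneg[of k k] by simp
  then have P_diag: "?P k k \<ge> (1 - \<gamma>) ^ Suc m"
    using Suc.IH[OF Suc.prems(2) Suc.prems(2)] by (simp add: id_mat_def del: prod_A.simps)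
  have "prod_A N \<gamma> \<omega> blk X n (Suc (Suc m)) i k \<ge> (1 - \<gamma>) * ?P i k + \<gamma> * ?w * ?P k k"
    using mat_mult_A_mat_entry_ge[where \<omega> = \<omega> and P = ?P and blk = blk and X = X and r = "n + Suc m",
        OF _ _ w_nonneg Suc.prems P_nonneg] gam
    by simp
  moreover have "(1 - \<gamma>) * ?P i k \<ge> (1 - \<gamma>) * ((1 - \<gamma>) ^ Suc m * id_mat i k + \<gamma> * (1 - \<gamma>) ^ m * ?S i k)"
    using Suc.IH[OF Suc.prems] gam by (intro mult_left_mono) auto
  moreover have "\<gamma> * ?w * ?P k k \<ge> \<gamma> * ?w * (1 - \<gamma>) ^ Suc m"
    using P_diag gam w_nonneg by (intro mult_left_mono) auto
  ultimately show ?case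
    by (simp add: algebra_simps)
qed

lemma block_weights_sum_one:
  assumes w_sum: "\<And>S Y. S \<subseteq> {1..N} \<Longrightarrow> S \<noteq> {} \<Longrightarrow> (\<Sum>j\<in>S. \<omega> S j Y) = 1"
    and w_zero: "\<And>S j Y. S \<subseteq> {1..N} \<Longrightarrow> S \<noteq> {} \<Longrightarrow> j \<notin> S \<Longrightarrow> \<omega> S j Y = 0"
    and part: "is_partition_fun N P"
    and i: "i \<in> {1..N}"
  shows "(\<Sum>k\<in>{1..N}. \<omega> (P i) k Y) = 1"
proof -
  have block: "i \<in> P i" "P i \<subseteq> {1..N}"
    using part i unfolding is_partition_fun_def by blast+
  have "(\<Sum>k\<in>{1..N}. \<omega> (P i) k Y) = (\<Sum>k\<in>P i. \<omega> (P i) k Y)"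
    using block w_zero[of "P i"] by (intro sum.mono_neutral_right) auto
  also have "\<dots> = 1"
    using block by (intro w_sum) auto
  finally show ?thesis .
qed

text \<open>Abstract form of the counting step: \<open>W t\<close> plays the role of \<open>W\<^sub>n\<^sub>+\<^sub>t\<close>, and \<open>T\<close> is the set
  of times at which rows \<open>i\<close> and \<open>j\<close> of \<open>W t\<close> agree.\<close>

lemma sum_min_ge_card_common_rows:
  fixes P :: "nat \<Rightarrow> nat \<Rightarrow> real" and W :: "nat \<Rightarrow> nat \<Rightarrow> nat \<Rightarrow> real"
  assumes c: "c \<ge> 0"
    and W_nonneg: "\<And>t l k. W t l k \<ge> 0"
    and P_i: "\<And>k. k \<in> K \<Longrightarrow> P i k \<ge> c * (\<Sum>t<m. W t i k)"
    and P_j: "\<And>k. k \<in> K \<Longrightarrow> P j k \<ge> c * (\<Sum>t<m. W t j k)"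
    and T: "T \<subseteq> {..<m}"
    and rows_agree: "\<And>t k. t \<in> T \<Longrightarrow> W t i k = W t j k"
    and row_sum: "\<And>t. t \<in> T \<Longrightarrow> (\<Sum>k\<in>K. W t i k) = 1"
  shows "c * real (card T) \<le> (\<Sum>k\<in>K. min (P i k) (P j k))"
proof -
  have common: "c * (\<Sum>t\<in>T. W t i k) \<le> min (P i k) (P j k)" if k: "k \<in> K" for k
  proof -
    have "(\<Sum>t\<in>T. W t i k) \<le> (\<Sum>t<m. W t i k)" "(\<Sum>t\<in>T. W t j k) \<le> (\<Sum>t<m. W t j k)"
      using T W_nonneg by (auto intro: sum_mono2)
    moreover have "(\<Sum>t\<in>T. W t i k) = (\<Sum>t\<in>T. W t j k)"
      using rows_agree by (intro sum.cong) auto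
    ultimately have "c * (\<Sum>t\<in>T. W t i k) \<le> c * (\<Sum>t<m. W t i k)"
        "c * (\<Sum>t\<in>T. W t i k) \<le> c * (\<Sum>t<m. W t j k)"
      using c by (auto intro: mult_left_mono)
    then show ?thesis
      using P_i[OF k] P_j[OF k] by simp
  qed
  have "c * real (card T) = c * (\<Sum>t\<in>T. \<Sum>k\<in>K. W t i k)"
    using row_sum by simp
  also have "\<dots> = (\<Sum>k\<in>K. c * (\<Sum>t\<in>T. W t i k))"
    by (simp add: sum.swap[of _ T] sum_distrib_left)
  also have "\<dots> \<le> (\<Sum>k\<in>K. min (P i k) (P j k))"
    by (intro sum_mono common)
  finally show ?thesis .
qed

lemma card_T_set_shift:
  "card (T_set blk i j n m) = card {t. t < m \<and> blk (n + t) i = blk (n + t) j}"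
proof -
  have "T_set blk i j n m = (\<lambda>t. n + t) ` {t. t < m \<and> blk (n + t) i = blk (n + t) j}"
  proof (rule set_eqI, rule iffI)
    fix r assume "r \<in> T_set blk i j n m"
    then show "r \<in> (\<lambda>t. n + t) ` {t. t < m \<and> blk (n + t) i = blk (n + t) j}"
      unfolding T_set_def by (intro image_eqI[of _ _ "r - n"]) auto
  qed (auto simp: T_set_def)
  then show ?thesis
    by (simp add: card_image)
qed

lemma G_val_le_card_T_set:
  assumes "i \<in> {1..N}" "j \<in> {1..N}"
  shows "G_val N blk n m \<le> card (T_set blk i j n m)"
  unfolding G_val_def using assms by (intro Min_le) auto

lemma ergodicity_coeff_ge:
  assumes "N \<ge> 1"
    and "\<And>i j. i \<in> {1..N} \<Longrightarrow> j \<in> {1..N} \<Longrightarrow> b \<le> (\<Sum>k\<in>{1..N}. min (A i k) (A j k))"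
  shows "b \<le> ergodicity_coeff N A"
  unfolding ergodicity_coeff_def using assms by (subst Min_ge_iff) auto

theorem lemma3p4:
  fixes N :: nat and \<gamma> :: real
    and \<omega> :: "nat set \<Rightarrow> nat \<Rightarrow> (nat \<Rightarrow> real ^ 'd) \<Rightarrow> real"
    and blk :: "nat \<Rightarrow> nat \<Rightarrow> nat set"
    and X :: "nat \<Rightarrow> (nat \<Rightarrow> real ^ 'd)"
    and n m :: nat
  assumes N2: "N \<ge> 2"
    and gam: "0 < \<gamma>" "\<gamma> < 1"
    and w_nonneg: "\<And>S j Y. \<omega> S j Y \<ge> 0"
    and w_sum: "\<And>S Y. S \<subseteq> {1..N} \<Longrightarrow> S \<noteq> {} \<Longrightarrow> (\<Sum>j\<in>S. \<omega> S j Y) = 1"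
    and w_zero: "\<And>S j Y. S \<subseteq> {1..N} \<Longrightarrow> S \<noteq> {} \<Longrightarrow> j \<notin> S \<Longrightarrow> \<omega> S j Y = 0"
    and parts: "\<And>r. is_partition_fun N (blk r)"
    and m1: "m \<ge> 1"
  shows "ergodicity_coeff N (prod_A N \<gamma> \<omega> blk X n m)
           \<ge> \<gamma> * (1 - \<gamma>) ^ (m - 1) * real (G_val N blk n m)"
proof -
  obtain m' where m: "m = Suc m'" using m1 by (cases m) auto
  define c where "c = \<gamma> * (1 - \<gamma>) ^ m'"
  define P where "P = prod_A N \<gamma> \<omega> blk X n m"
  define W where "W t i k = \<omega> (blk (n + t) i) k (X (n + t))" for t i k
  have c: "c \<ge> 0" using gam by (simp add: c_def)
  have P_ge: "P i k \<ge> c * (\<Sum>t<m. W t i k)" if "i \<in> {1..N}" "k \<in> {1..N}" for i k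
  proof -
    have "(1 - \<gamma>) ^ m * id_mat i k \<ge> 0"
      using gam id_mat_nonneg[of i k] by simp
    then show ?thesis
      using prod_A_entry_ge[where \<omega> = \<omega> and blk = blk and X = X and n = n and m = m', OF gam w_nonneg that]
      unfolding P_def W_def c_def m[symmetric] by linarith
  qed
  have "c * real (G_val N blk n m) \<le> (\<Sum>k\<in>{1..N}. min (P i k) (P j k))"
    if ij: "i \<in> {1..N}" "j \<in> {1..N}" for i j
  proof -
    have "c * real (G_val N blk n m) \<le> c * real (card (T_set blk i j n m))"
      using G_val_le_card_T_set[OF ij] c by (intro mult_left_mono) auto
    also have "\<dots> \<le> (\<Sum>k\<in>{1..N}. min (P i k) (P j k))"
      unfolding card_T_set_shift
    proof (rule sum_min_ge_card_common_rows[where W = W])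
      show "\<And>t l k. W t l k \<ge> 0" using w_nonneg by (simp add: W_def)
      show "(\<Sum>k\<in>{1..N}. W t i k) = 1" for t
        unfolding W_def
        by (rule block_weights_sum_one[where \<omega> = \<omega> and P = "blk (n + t)", OF w_sum w_zero parts ij(1)])
    qed (use ij c P_ge in \<open>auto simp: W_def\<close>)
    finally show ?thesis .
  qed
  then show ?thesis
    using ergodicity_coeff_ge[of N] N2 unfolding P_def c_def m by simp
qed

end
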